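(* Let $(G=(V,E),(p_e))$ be an IC model instance and $t,d\in\mathbb{Z}^+$ with $d\le t$. For every status $U$, $N(U_{\mathrm f})\ge N(U)$, where $U_{\mathrm f}$ and $N(\cdot)$ are defined in the context.
   Context: IC model: directed graph $G=(V,E)$, each edge $e$ independently live with probability $p_e\in(0,1]$. Diffusion proceeds in rounds: in each round newly activated nodes attempt to activate inactive out-neighbors along edges, succeeding iff the edge is live; attempted edges become observed. A realization $\phi=(L(\phi),D(\phi))$ is a pair of disjoint edge sets (observed live, observed dead); full if $L(\phi)\cup D(\phi)=E$; $\Psi$ is the set of full realizations; $\phi_1\prec\phi_2$ means $L(\phi_1)\subseteq L(\phi_2)$, $D(\phi_1)\subseteq D(\phi_2)$, with $\Pr[\phi_2\mid\phi_1]=\prod_{e\in L(\phi_2)\setminus L(\phi_1)}p_e\prod_{e\in D(\phi_2)\setminus D(\phi_1)}(1-p_e)$. A status is $U=(\dot S(U),\dot\phi(U))$: current active node set and observed realization. $\dot{\mathcal U}_d(U)$ is the set of possible statuses after $d$ further diffusion rounds following $U$ (without new seeds), each $U_*$ occurring with probability $\Pr[\dot\phi(U_* )\mid\dot\phi(U)]$. $A_s(S,\psi)$ is the set of nodes reachable from $S$ via a path of at most $s$ edges all in $L(\psi)$; $\Delta_s(S,V^*,\psi)=|A_s(S\cup V^*,\psi)|-|A_s(S,\psi)|$; $\Delta f_s(S,V^*,\phi)=\sum_{\psi\in\Psi,\phi\prec\psi}\Pr[\psi\mid\phi]\Delta_s(S,V^*,\psi)$. $N(U)=\sum_{U_*\in\dot{\mathcal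 U}_d(U)}\Pr[\dot\phi(U_* )\mid\dot\phi(U)]\cdot\max_{v\in V}\Delta f_{t-d}(\dot S(U_* ),\{v\},\dot\phi(U_* ))$. $U_{\mathrm f}$ is the status with $\dot S(U_{\mathrm f})=\dot S(U)$, $L(\dot\phi(U_{\mathrm f}))=L(\dot\phi(U))$ and $D(\dot\phi(U_{\mathrm f}))=D(\dot\phi(U))\cup\{(u,v)\in E:(u,v)\notin L(\dot\phi(U))\cup D(\dot\phi(U)),\ u\in\dot S(U)\}$ (every unobserved edge out of an active node is declared dead). *)

theory Defs
  imports Complex_Main
begin

type_synonym 'v edge = "'v \<times> 'v"
(* realization phi = (L(phi), D(phi)) : observed live edges, observed dead edges *)
type_synonym 'v realization = "'v edge set \<times> 'v edge set"
(* status U = (S(U), phi(U)) : active nodes, observed realization *)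
type_synonym 'v status = "'v set \<times> 'v realization"

definition ic_instance :: "'v set \<Rightarrow> 'v edge set \<Rightarrow> ('v edge \<Rightarrow> real) \<Rightarrow> bool" where
  "ic_instance V E p \<longleftrightarrow> finite V \<and> V \<noteq> {} \<and> E \<subseteq> V \<times> V \<and> (\<forall>e\<in>E. 0 < p e \<and> p e \<le> 1)"

definition realization :: "'v edge set \<Rightarrow> 'v realization \<Rightarrow> bool" where
  "realization E phi \<longleftrightarrow> fst phi \<subseteq> E \<and> snd phi \<subseteq> E \<and> fst phi \<inter> snd phi = {}"

definition full_realizations :: "'v edge set \<Rightarrow> 'v realization set" where
  "full_realizations E = {psi. realization E psi \<and> fst psi \<union> snd psi = E}"

definition prec :: "'v realization \<Rightarrow> 'v realization \<Rightarrow> bool" where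
  "prec phi1 phi2 \<longleftrightarrow> fst phi1 \<subseteq> fst phi2 \<and> snd phi1 \<subseteq> snd phi2"

(* Pr[phi2 | phi1] *)
definition cond_prob :: "('v edge \<Rightarrow> real) \<Rightarrow> 'v realization \<Rightarrow> 'v realization \<Rightarrow> real" where
  "cond_prob p phi2 phi1 =
     (\<Prod>e\<in>fst phi2 - fst phi1. p e) * (\<Prod>e\<in>snd phi2 - snd phi1. 1 - p e)"

fun reach :: "nat \<Rightarrow> 'v set \<Rightarrow> 'v edge set \<Rightarrow> 'v set" where
  "reach 0 S L = S"
| "reach (Suc s) S L = reach s S L \<union> {v. \<exists>u\<in>reach s S L. (u, v) \<in> L}"

definition A :: "nat \<Rightarrow> 'v set \<Rightarrow> 'v realization \<Rightarrow> 'v set" where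
  "A s S psi = reach s S (fst psi)"

definition Delta :: "nat \<Rightarrow> 'v set \<Rightarrow> 'v set \<Rightarrow> 'v realization \<Rightarrow> real" where
  "Delta s S W psi = real (card (A s (S \<union> W) psi)) - real (card (A s S psi))"

definition Delta_f :: "'v edge set \<Rightarrow> ('v edge \<Rightarrow> real) \<Rightarrow> nat \<Rightarrow> 'v set \<Rightarrow> 'v set \<Rightarrow> 'v realization \<Rightarrow> real" where
  "Delta_f E p s S W phi =
     (\<Sum>psi\<in>{psi\<in>full_realizations E. prec phi psi}. cond_prob p psi phi * Delta s S W psi)"

definition attempted :: "'v edge set \<Rightarrow> 'v status \<Rightarrow> 'v edge set" where
  "attempted E U = {(u, v) \<in> E. u \<in> fst U \<and> v \<notin> fst U \<and>
                      (u, v) \<notin> fst (snd U) \<union> snd (snd U)}"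

definition round_outcomes :: "'v edge set \<Rightarrow> 'v status \<Rightarrow> 'v status set" where
  "round_outcomes E U =
     {(fst U \<union> snd ` Lnew, (fst (snd U) \<union> Lnew, snd (snd U) \<union> (attempted E U - Lnew))) | Lnew.
        Lnew \<subseteq> attempted E U}"

fun statuses_after :: "'v edge set \<Rightarrow> nat \<Rightarrow> 'v status \<Rightarrow> 'v status set" where
  "statuses_after E 0 U = {U}"
| "statuses_after E (Suc d) U = \<Union> (round_outcomes E ` statuses_after E d U)"

definition N :: "'v set \<Rightarrow> 'v edge set \<Rightarrow> ('v edge \<Rightarrow> real) \<Rightarrow> nat \<Rightarrow> nat \<Rightarrow> 'v status \<Rightarrow> real" where
  "N V E p t d U =
     (\<Sum>U'\<in>statuses_after E d U.
        cond_prob p (snd U') (snd U) * Max ((\<lambda>v. Delta_f E p (t - d) (fst U') {v} (snd U')) ` V))"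

definition U_f :: "'v edge set \<Rightarrow> 'v status \<Rightarrow> 'v status" where
  "U_f E U = (fst U, (fst (snd U),
      snd (snd U) \<union> {(u, v) \<in> E. (u, v) \<notin> fst (snd U) \<union> snd (snd U) \<and> u \<in> fst U}))"

definition valid_status :: "'v set \<Rightarrow> 'v edge set \<Rightarrow> 'v status \<Rightarrow> bool" where
  "valid_status V E U \<longleftrightarrow> fst U \<subseteq> V \<and> realization E (snd U) \<and>
     (\<forall>(u, v)\<in>fst (snd U) \<union> snd (snd U). u \<in> fst U) \<and>
     (\<forall>(u, v)\<in>fst (snd U). v \<in> fst U)"

end

theory Submission
  imports Defs
begin

(* Let S be the active set of U.  In U_f every edge leaving S is observed, so in every completion
   S is closed under live edges and the gain of a seed set W is the number of nodes it reaches
   outside S.  After d further rounds from U the active set S' contains S, and the gain of W is at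
   most the number h of nodes outside S' that W reaches through edges with tail outside S'.  Those
   edges are unobserved both after the d rounds and in U_f, so h has the same expectation under
   either realization, and in U_f it is bounded by the gain.  As the gains are nonnegative and the
   outcome probabilities of d rounds sum to at most 1, N(U) <= max gain in U_f = N(U_f). *)

lemma sum_UN_le:
  fixes g :: "'b \<Rightarrow> 'c::ordered_comm_monoid_add"
  assumes "finite I" "\<And>a. a \<in> I \<Longrightarrow> finite (B a)" "\<And>x. x \<in> \<Union>(B ` I) \<Longrightarrow> 0 \<le> g x"
  shows "sum g (\<Union>(B ` I)) \<le> (\<Sum>a\<in>I. sum g (B a))"
proof -
  have UN_eq: "\<Union>(B ` I) = snd ` Sigma I B" by force
  have "sum g (snd ` Sigma I B) \<le> sum (g \<circ> snd) (Sigma I B)"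
    using assms by (intro sum_image_le finite_SigmaI) (auto simp: UN_eq)
  also have "\<dots> = (\<Sum>a\<in>I. sum g (B a))"
    using assms by (simp add: sum.Sigma split_def)
  finally show ?thesis unfolding UN_eq .
qed

lemma reach_Un: "reach s (X \<union> Y) L = reach s X L \<union> reach s Y L"
  by (induction s) auto

lemma reach_mono: "X \<subseteq> Y \<Longrightarrow> L \<subseteq> L' \<Longrightarrow> reach s X L \<subseteq> reach s Y L'"
  by (induction s) auto

lemma reach_base: "X \<subseteq> reach s X L"
  by (induction s) auto

lemma finite_reach: "finite X \<Longrightarrow> finite L \<Longrightarrow> finite (reach s X L)"
proof (induction s)
  case (Suc s)
  have "{v. \<exists>u\<in>reach s X L. (u, v) \<in> L} \<subseteq> snd ` L" by force
  then show ?case using Suc by (simp add: finite_subset)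
qed simp

lemma reach_closed: "(\<And>a b. (a, b) \<in> L \<Longrightarrow> a \<in> B \<Longrightarrow> b \<in> B) \<Longrightarrow> reach s B L = B"
  by (induction s) auto

lemma reach_subset_avoiding: "reach s W L \<subseteq> reach s B L \<union> reach s W {e \<in> L. fst e \<notin> B}"
proof (induction s)
  case (Suc s)
  show ?case
  proof
    fix x assume "x \<in> reach (Suc s) W L"
    then consider "x \<in> reach s W L" | u where "u \<in> reach s W L" "(u, x) \<in> L" by auto
    then show "x \<in> reach (Suc s) B L \<union> reach (Suc s) W {e \<in> L. fst e \<notin> B}"
    proof cases
      case 1 with Suc.IH show ?thesis by auto
    next
      case 2
      then consider "u \<in> reach s B L" | "u \<notin> B" "u \<in> reach s W {e \<in> L. fst e \<notin> B}"
        using Suc.IH reach_base[of B s L] by blast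
      then show ?thesis using 2(2) by cases auto
    qed
  qed
qed simp

lemma card_reach_Un_le:
  assumes "finite S" "finite W" "finite L"
  shows "card (reach s (S \<union> W) L) \<le> card (reach s S L) + card (reach s W {e \<in> L. fst e \<notin> S} - S)"
proof -
  have "reach s (S \<union> W) L \<subseteq> reach s S L \<union> (reach s W {e \<in> L. fst e \<notin> S} - S)"
    using reach_Un[of s S W L] reach_subset_avoiding[of s W L S] reach_base[of S s L] by blast
  then have "card (reach s (S \<union> W) L) \<le> card (reach s S L \<union> (reach s W {e \<in> L. fst e \<notin> S} - S))"
    using assms by (intro card_mono finite_UnI finite_Diff finite_reach) auto
  also have "\<dots> \<le> card (reach s S L) + card (reach s W {e \<in> L. fst e \<notin> S} - S)"
    by (rule card_Un_le)
  finally show ?thesis .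
qed

lemma card_reach_Un_ge:
  assumes "reach s S L = S" "S \<subseteq> S'" "finite S" "finite W" "finite L"
  shows "card (reach s W {e \<in> L. fst e \<notin> S'} - S') + card S \<le> card (reach s (S \<union> W) L)"
proof -
  have fin: "finite (reach s (S \<union> W) L)" using assms by (intro finite_reach) auto
  have "reach s W {e \<in> L. fst e \<notin> S'} - S' \<subseteq> reach s (S \<union> W) L - S"
    using assms(2) reach_mono[of W "S \<union> W" "{e \<in> L. fst e \<notin> S'}" L s] by blast
  then have "card (reach s W {e \<in> L. fst e \<notin> S'} - S') \<le> card (reach s (S \<union> W) L - S)"
    using fin by (intro card_mono) auto
  also have "\<dots> = card (reach s (S \<union> W) L) - card S"
    using reach_base[of "S \<union> W" s L] assms(3) by (intro card_Diff_subset) auto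
  finally show ?thesis
    using card_mono[OF fin, of S] reach_base[of "S \<union> W" s L] by auto
qed

definition live_prob :: "('v edge \<Rightarrow> real) \<Rightarrow> 'v edge set \<Rightarrow> 'v edge set \<Rightarrow> real" where
  "live_prob p F Y = (\<Prod>e\<in>Y. p e) * (\<Prod>e\<in>F - Y. 1 - p e)"

lemma sum_live_prob: "finite F \<Longrightarrow> (\<Sum>Y\<in>Pow F. live_prob p F Y) = 1"
  using prod_add[of F p "\<lambda>e. 1 - p e"] by (simp add: live_prob_def)

lemma live_prob_Un:
  assumes "finite F" "finite D" "F \<inter> D = {}" "Y \<subseteq> F" "Z \<subseteq> D"
  shows "live_prob p (F \<union> D) (Y \<union> Z) = live_prob p F Y * live_prob p D Z"
proof -
  have "(F \<union> D) - (Y \<union> Z) = (F - Y) \<union> (D - Z)" using assms by blast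
  moreover have "finite Y" "finite Z" using assms by (auto intro: finite_subset)
  moreover have "Y \<inter> Z = {}" "(F - Y) \<inter> (D - Z) = {}" using assms by blast+
  ultimately show ?thesis
    using assms by (simp add: live_prob_def prod.union_disjoint)
qed

lemma Pow_Un_eq_image:
  assumes "F \<inter> D = {}"
  shows "Pow (F \<union> D) = (\<lambda>(Y, Z). Y \<union> Z) ` (Pow F \<times> Pow D)"
proof (intro equalityI subsetI)
  fix X assume "X \<in> Pow (F \<union> D)"
  then have "X = (\<lambda>(Y, Z). Y \<union> Z) (X \<inter> F, X \<inter> D)" "(X \<inter> F, X \<inter> D) \<in> Pow F \<times> Pow D"
    by auto
  then show "X \<in> (\<lambda>(Y, Z). Y \<union> Z) ` (Pow F \<times> Pow D)" by blast
qed auto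

lemma sum_live_prob_marginal:
  assumes "finite U" "F \<subseteq> U"
  shows "(\<Sum>X\<in>Pow U. live_prob p U X * h (X \<inter> F)) = (\<Sum>Y\<in>Pow F. live_prob p F Y * h Y)"
proof -
  define D where "D = U - F"
  have U: "U = F \<union> D" and disj: "F \<inter> D = {}" and fin: "finite F" "finite D"
    using assms finite_subset unfolding D_def by auto
  have inj: "inj_on (\<lambda>(Y, Z). Y \<union> Z) (Pow F \<times> Pow D)"
    using disj by (auto simp: inj_on_def) blast+
  have restrict: "(Y \<union> Z) \<inter> F = Y" if "Y \<subseteq> F" "Z \<subseteq> D" for Y Z
    using that disj by blast
  have "(\<Sum>X\<in>Pow U. live_prob p U X * h (X \<inter> F))
      = (\<Sum>(Y, Z)\<in>Pow F \<times> Pow D. live_prob p F Y * live_prob p D Z * h Y)"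
    unfolding U Pow_Un_eq_image[OF disj] using inj disj fin
    by (subst sum.reindex) (auto intro!: sum.cong simp: live_prob_Un restrict)
  also have "\<dots> = (\<Sum>Y\<in>Pow F. live_prob p F Y * h Y * (\<Sum>Z\<in>Pow D. live_prob p D Z))"
    by (simp add: sum.cartesian_product[symmetric] sum_distrib_left mult_ac)
  finally show ?thesis using fin by (simp add: sum_live_prob)
qed

lemma cond_prob_self [simp]: "cond_prob p phi phi = 1"
  unfolding cond_prob_def by simp

lemma cond_prob_nonneg:
  assumes "realization E psi" "\<forall>e\<in>E. 0 \<le> p e \<and> p e \<le> 1"
  shows "0 \<le> cond_prob p psi phi"
  using assms unfolding cond_prob_def realization_def
  by (intro mult_nonneg_nonneg prod_nonneg) auto

lemma cond_prob_trans:
  assumes "finite E" "realization E phi''" "prec phi phi'" "prec phi' phi''"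
  shows "cond_prob p phi'' phi = cond_prob p phi'' phi' * cond_prob p phi' phi"
proof -
  have fin: "finite (fst phi'')" "finite (snd phi'')"
    using assms(1,2) unfolding realization_def by (auto intro: finite_subset)
  have "fst phi'' - fst phi = (fst phi'' - fst phi') \<union> (fst phi' - fst phi)"
    "snd phi'' - snd phi = (snd phi'' - snd phi') \<union> (snd phi' - snd phi)"
    using assms(3,4) unfolding prec_def by auto
  moreover have "finite (fst phi' - fst phi)" "finite (snd phi' - snd phi)"
    using fin assms(4) unfolding prec_def by (auto intro: finite_subset)
  moreover have "(fst phi'' - fst phi') \<inter> (fst phi' - fst phi) = {}"
    "(snd phi'' - snd phi') \<inter> (snd phi' - snd phi) = {}" by auto
  ultimately show ?thesis
    using fin unfolding cond_prob_def by (simp add: prod.union_disjoint)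
qed

definition unobserved :: "'v edge set \<Rightarrow> 'v realization \<Rightarrow> 'v edge set" where
  "unobserved E phi = E - (fst phi \<union> snd phi)"

abbreviation full_extensions :: "'v edge set \<Rightarrow> 'v realization \<Rightarrow> 'v realization set" where
  "full_extensions E phi \<equiv> {psi \<in> full_realizations E. prec phi psi}"

lemma full_extensions_eq_image:
  assumes "realization E phi"
  shows "full_extensions E phi
       = (\<lambda>X. (fst phi \<union> X, snd phi \<union> (unobserved E phi - X))) ` Pow (unobserved E phi)"
proof (intro equalityI subsetI)
  fix psi assume psi: "psi \<in> full_extensions E phi"
  then have "psi = (fst phi \<union> (fst psi - fst phi), snd phi \<union> (unobserved E phi - (fst psi - fst phi)))"
    and "fst psi - fst phi \<in> Pow (unobserved E phi)"
    by (auto simp: full_realizations_def realization_def prec_def unobserved_def prod_eq_iff)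
  then show "psi \<in> (\<lambda>X. (fst phi \<union> X, snd phi \<union> (unobserved E phi - X))) ` Pow (unobserved E phi)"
    by blast
qed (use assms in \<open>auto simp: full_realizations_def realization_def prec_def unobserved_def\<close>)

lemma sum_full_extensions_marginal:
  assumes "finite E" "realization E phi" "F \<subseteq> unobserved E phi"
  shows "(\<Sum>psi\<in>full_extensions E phi. cond_prob p psi phi * h (fst psi \<inter> F))
       = (\<Sum>Y\<in>Pow F. live_prob p F Y * h Y)"
proof -
  define Q where "Q = unobserved E phi"
  define ext where "ext X = (fst phi \<union> X, snd phi \<union> (Q - X))" for X
  have Q_disj: "Q \<inter> (fst phi \<union> snd phi) = {}" unfolding Q_def unobserved_def by blast
  have img: "full_extensions E phi = ext ` Pow Q"
    unfolding ext_def Q_def by (rule full_extensions_eq_image[OF assms(2)])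
  have "inj_on ext (Pow Q)"
    using Q_disj by (auto simp: inj_on_def ext_def prod_eq_iff)
  then have "(\<Sum>psi\<in>full_extensions E phi. cond_prob p psi phi * h (fst psi \<inter> F))
      = (\<Sum>X\<in>Pow Q. cond_prob p (ext X) phi * h (fst (ext X) \<inter> F))"
    unfolding img by (simp add: sum.reindex)
  also have "\<dots> = (\<Sum>X\<in>Pow Q. live_prob p Q X * h (X \<inter> F))"
  proof (rule sum.cong)
    fix X assume "X \<in> Pow Q"
    then have "fst (ext X) - fst phi = X" "snd (ext X) - snd phi = Q - X" "fst (ext X) \<inter> F = X \<inter> F"
      using Q_disj assms(3) unfolding ext_def Q_def by auto
    then show "cond_prob p (ext X) phi * h (fst (ext X) \<inter> F) = live_prob p Q X * h (X \<inter> F)"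
      by (simp add: cond_prob_def live_prob_def)
  qed simp
  also have "\<dots> = (\<Sum>Y\<in>Pow F. live_prob p F Y * h Y)"
    using assms unfolding Q_def unobserved_def by (intro sum_live_prob_marginal) auto
  finally show ?thesis .
qed

lemma Delta_nonneg:
  assumes "finite (fst psi)" "finite S" "finite W"
  shows "0 \<le> Delta s S W psi"
proof -
  have "reach s S (fst psi) \<subseteq> reach s (S \<union> W) (fst psi)" by (rule reach_mono) auto
  then have "card (reach s S (fst psi)) \<le> card (reach s (S \<union> W) (fst psi))"
    using assms by (intro card_mono finite_reach) auto
  then show ?thesis unfolding Delta_def A_def by simp
qed

lemma Delta_f_nonneg:
  assumes "finite E" "\<forall>e\<in>E. 0 \<le> p e \<and> p e \<le> 1" "finite S" "finite W"
  shows "0 \<le> Delta_f E p s S W phi"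
  unfolding Delta_f_def
proof (rule sum_nonneg)
  fix psi assume "psi \<in> full_extensions E phi"
  then have "realization E psi" unfolding full_realizations_def by simp
  moreover from this have "finite (fst psi)"
    using assms(1) unfolding realization_def by (auto intro: finite_subset)
  ultimately show "0 \<le> cond_prob p psi phi * Delta s S W psi"
    using assms by (simp add: cond_prob_nonneg Delta_nonneg)
qed

lemma sum_full_extensions_mono:
  assumes "\<forall>e\<in>E. 0 \<le> p e \<and> p e \<le> 1" "\<And>psi. psi \<in> full_extensions E phi \<Longrightarrow> f psi \<le> g psi"
  shows "(\<Sum>psi\<in>full_extensions E phi. cond_prob p psi phi * f psi)
       \<le> (\<Sum>psi\<in>full_extensions E phi. cond_prob p psi phi * g psi)"
proof (intro sum_mono mult_left_mono)
  fix psi assume psi: "psi \<in> full_extensions E phi"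
  then show "f psi \<le> g psi" by (rule assms(2))
  from psi have "realization E psi" unfolding full_realizations_def by simp
  then show "0 \<le> cond_prob p psi phi" using assms(1) by (rule cond_prob_nonneg)
qed

definition observed_from :: "'v set \<Rightarrow> 'v realization \<Rightarrow> bool" where
  "observed_from S phi \<longleftrightarrow> (\<forall>e\<in>fst phi \<union> snd phi. fst e \<in> S)"

definition explored :: "'v edge set \<Rightarrow> 'v set \<Rightarrow> 'v realization \<Rightarrow> bool" where
  "explored E S phi \<longleftrightarrow>
     (\<forall>(u, w)\<in>E. u \<in> S \<longrightarrow> (u, w) \<in> fst phi \<union> snd phi \<and> ((u, w) \<in> fst phi \<longrightarrow> w \<in> S))"

lemma reach_explored:
  assumes "explored E S phi" "psi \<in> full_extensions E phi"
  shows "reach s S (fst psi) = S"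
proof (rule reach_closed)
  fix a b assume ab: "(a, b) \<in> fst psi" "a \<in> S"
  then have "(a, b) \<in> E" "(a, b) \<notin> snd psi"
    using assms(2) unfolding full_realizations_def realization_def by auto
  then show "b \<in> S"
    using assms ab unfolding explored_def prec_def by blast
qed

lemma Delta_f_le_explored:
  assumes fin: "finite E" "finite S" "finite S'" "finite W"
    and p: "\<forall>e\<in>E. 0 \<le> p e \<and> p e \<le> 1"
    and phi: "realization E phi" "explored E S phi" "observed_from S phi"
    and phi': "realization E phi'" "observed_from S' phi'"
    and "S \<subseteq> S'"
  shows "Delta_f E p s S' W phi' \<le> Delta_f E p s S W phi"
proof -
  define F where "F = {e \<in> E. fst e \<notin> S'}"
  define h where "h Y = real (card (reach s W Y - S'))" for Y
  \<comment> \<open>h only looks at edges of F, which are unobserved in both phi and phi', so it has the same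
      expectation under both; it bounds the gain in phi' from above and the gain in phi from below.\<close>
  have F_eq: "{e \<in> fst psi. fst e \<notin> S'} = fst psi \<inter> F" if "realization E psi" for psi
    using that unfolding F_def realization_def by auto
  have fin_psi: "finite (fst psi)" if "realization E psi" for psi
    using that fin(1) unfolding realization_def by (auto intro: finite_subset)
  have "Delta_f E p s S' W phi'
      \<le> (\<Sum>psi\<in>full_extensions E phi'. cond_prob p psi phi' * h (fst psi \<inter> F))"
    unfolding Delta_f_def
  proof (rule sum_full_extensions_mono[OF p])
    fix psi assume "psi \<in> full_extensions E phi'"
    then have psi: "realization E psi" unfolding full_realizations_def by simp
    show "Delta s S' W psi \<le> h (fst psi \<inter> F)"
      using card_reach_Un_le[OF fin(3,4) fin_psi[OF psi], of s]
      unfolding Delta_def A_def h_def F_eq[OF psi] by linarith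
  qed
  also have "\<dots> = (\<Sum>Y\<in>Pow F. live_prob p F Y * h Y)"
    using fin(1) phi'(1)
    by (rule sum_full_extensions_marginal) (use phi'(2) in \<open>auto simp: F_def unobserved_def observed_from_def\<close>)
  also have "\<dots> = (\<Sum>psi\<in>full_extensions E phi. cond_prob p psi phi * h (fst psi \<inter> F))"
    using fin(1) phi(1)
    by (rule sum_full_extensions_marginal[symmetric])
      (use phi(3) \<open>S \<subseteq> S'\<close> in \<open>auto simp: F_def unobserved_def observed_from_def\<close>)
  also have "\<dots> \<le> Delta_f E p s S W phi"
    unfolding Delta_f_def
  proof (rule sum_full_extensions_mono[OF p])
    fix psi assume ext: "psi \<in> full_extensions E phi"
    then have psi: "realization E psi" unfolding full_realizations_def by simp
    show "h (fst psi \<inter> F) \<le> Delta s S W psi"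
      using card_reach_Un_ge[OF reach_explored[OF phi(2) ext, of s] \<open>S \<subseteq> S'\<close> fin(2,4) fin_psi[OF psi]]
      unfolding Delta_def A_def h_def F_eq[OF psi] reach_explored[OF phi(2) ext] by linarith
  qed
  finally show ?thesis .
qed

definition round_outcome :: "'v edge set \<Rightarrow> 'v status \<Rightarrow> 'v edge set \<Rightarrow> 'v status" where
  "round_outcome E U Lnew =
     (fst U \<union> snd ` Lnew, (fst (snd U) \<union> Lnew, snd (snd U) \<union> (attempted E U - Lnew)))"

lemma round_outcomes_eq_image: "round_outcomes E U = round_outcome E U ` Pow (attempted E U)"
  unfolding round_outcomes_def round_outcome_def by auto

lemma round_outcomes_extend:
  "U' \<in> round_outcomes E U \<Longrightarrow> fst U \<subseteq> fst U' \<and> prec (snd U) (snd U')"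
  unfolding round_outcomes_eq_image round_outcome_def prec_def by auto

lemma finite_round_outcomes: "finite E \<Longrightarrow> finite (round_outcomes E U)"
  unfolding round_outcomes_eq_image attempted_def by (auto intro: finite_subset)

lemma valid_status_round_outcome:
  assumes "E \<subseteq> V \<times> V" "valid_status V E U" "Lnew \<subseteq> attempted E U"
  shows "valid_status V E (round_outcome E U Lnew)"
proof -
  obtain S L D where U: "U = (S, L, D)" by (cases U) auto
  have "attempted E U = {(u, w) \<in> E. u \<in> S \<and> w \<notin> S \<and> (u, w) \<notin> L \<union> D}"
    unfolding attempted_def U by simp
  then show ?thesis
    using assms unfolding valid_status_def realization_def round_outcome_def U
    by (auto intro: rev_image_eqI)
qed

lemma statuses_after_valid:
  assumes "E \<subseteq> V \<times> V" "valid_status V E U"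
  shows "U' \<in> statuses_after E d U \<Longrightarrow> valid_status V E U'"
proof (induction d arbitrary: U')
  case (Suc d)
  then show ?case
    using valid_status_round_outcome[OF assms(1)] by (auto simp: round_outcomes_eq_image)
qed (simp add: assms(2))

lemma statuses_after_extends:
  "U' \<in> statuses_after E d U \<Longrightarrow> fst U \<subseteq> fst U' \<and> prec (snd U) (snd U')"
proof (induction d arbitrary: U')
  case (Suc d)
  then obtain U'' where "U'' \<in> statuses_after E d U" "U' \<in> round_outcomes E U''" by auto
  with Suc.IH[of U''] round_outcomes_extend[of U' E U''] show ?case
    unfolding prec_def by blast
qed (simp add: prec_def)

lemma finite_statuses_after: "finite E \<Longrightarrow> finite (statuses_after E d U)"
  by (induction d) (simp_all add: finite_round_outcomes)

lemma cond_prob_statuses_after_nonneg: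
  assumes "E \<subseteq> V \<times> V" "valid_status V E U" "\<forall>e\<in>E. 0 \<le> p e \<and> p e \<le> 1"
    and "U' \<in> statuses_after E d U"
  shows "0 \<le> cond_prob p (snd U') (snd U)"
  using statuses_after_valid[OF assms(1,2,4)] assms(3)
  unfolding valid_status_def by (blast intro: cond_prob_nonneg)

lemma sum_cond_prob_round_outcomes:
  assumes "finite E"
  shows "(\<Sum>U'\<in>round_outcomes E U. cond_prob p (snd U') (snd U)) = 1"
proof -
  have fin: "finite (attempted E U)"
    using assms unfolding attempted_def by (auto intro: finite_subset)
  have disj: "attempted E U \<inter> (fst (snd U) \<union> snd (snd U)) = {}"
    unfolding attempted_def by auto
  have "inj_on (round_outcome E U) (Pow (attempted E U))"
    using disj by (auto simp: inj_on_def round_outcome_def)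
  then have "(\<Sum>U'\<in>round_outcomes E U. cond_prob p (snd U') (snd U))
      = (\<Sum>Lnew\<in>Pow (attempted E U). cond_prob p (snd (round_outcome E U Lnew)) (snd U))"
    by (simp add: round_outcomes_eq_image sum.reindex)
  also have "\<dots> = (\<Sum>Lnew\<in>Pow (attempted E U). live_prob p (attempted E U) Lnew)"
  proof (rule sum.cong)
    fix Lnew assume "Lnew \<in> Pow (attempted E U)"
    then have "fst (snd (round_outcome E U Lnew)) - fst (snd U) = Lnew"
      "snd (snd (round_outcome E U Lnew)) - snd (snd U) = attempted E U - Lnew"
      using disj unfolding round_outcome_def by auto
    then show "cond_prob p (snd (round_outcome E U Lnew)) (snd U) = live_prob p (attempted E U) Lnew"
      unfolding cond_prob_def live_prob_def by simp
  qed simp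
  also have "\<dots> = 1" using fin by (rule sum_live_prob)
  finally show ?thesis .
qed

lemma sum_cond_prob_statuses_after_le:
  assumes "finite E" "E \<subseteq> V \<times> V" "valid_status V E U" "\<forall>e\<in>E. 0 \<le> p e \<and> p e \<le> 1"
  shows "(\<Sum>U'\<in>statuses_after E d U. cond_prob p (snd U') (snd U)) \<le> 1"
proof (induction d)
  case (Suc d)
  let ?c = "\<lambda>U'. cond_prob p (snd U') (snd U)"
  have "sum ?c (statuses_after E (Suc d) U) \<le> (\<Sum>U''\<in>statuses_after E d U. sum ?c (round_outcomes E U''))"
    unfolding statuses_after.simps
  proof (rule sum_UN_le)
    show "finite (statuses_after E d U)" "finite (round_outcomes E U'')" for U''
      using assms(1) by (simp_all add: finite_statuses_after finite_round_outcomes)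
    show "0 \<le> ?c U'" if "U' \<in> \<Union>(round_outcomes E ` statuses_after E d U)" for U'
      using assms(2-4) that by (intro cond_prob_statuses_after_nonneg[of E V U p U' "Suc d"]) simp_all
  qed
  also have "\<dots> = (\<Sum>U''\<in>statuses_after E d U.
                    ?c U'' * (\<Sum>U'\<in>round_outcomes E U''. cond_prob p (snd U') (snd U'')))"
  proof (intro sum.cong refl)
    fix U'' assume U'': "U'' \<in> statuses_after E d U"
    have "?c U' = cond_prob p (snd U') (snd U'') * ?c U''" if "U' \<in> round_outcomes E U''" for U'
    proof (rule cond_prob_trans[OF assms(1)])
      have U': "U' \<in> statuses_after E (Suc d) U" using that U'' by auto
      show "realization E (snd U')"
        using statuses_after_valid[OF assms(2,3) U'] unfolding valid_status_def by blast
      show "prec (snd U) (snd U'')" using statuses_after_extends[OF U''] by blast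
      show "prec (snd U'') (snd U')" using round_outcomes_extend[OF that] by blast
    qed
    then show "sum ?c (round_outcomes E U'')
        = ?c U'' * (\<Sum>U'\<in>round_outcomes E U''. cond_prob p (snd U') (snd U''))"
      by (simp add: sum_distrib_left mult.commute)
  qed
  also have "\<dots> = sum ?c (statuses_after E d U)"
    using assms(1) by (simp add: sum_cond_prob_round_outcomes)
  finally show ?case using Suc.IH by linarith
qed simp

lemma observed_from_valid_status: "valid_status V E U \<Longrightarrow> observed_from (fst U) (snd U)"
  unfolding valid_status_def observed_from_def by auto

lemma U_f_explored:
  assumes "valid_status V E U"
  shows "realization E (snd (U_f E U))" "explored E (fst U) (snd (U_f E U))"
    "observed_from (fst U) (snd (U_f E U))"
  using assms unfolding valid_status_def realization_def explored_def observed_from_def U_f_def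
  by auto

lemma statuses_after_U_f: "statuses_after E d (U_f E U) = {U_f E U}"
proof -
  have "attempted E (U_f E U) = {}" unfolding attempted_def U_f_def by auto
  then have "round_outcomes E (U_f E U) = {U_f E U}"
    unfolding round_outcomes_eq_image round_outcome_def U_f_def by simp
  then show ?thesis by (induction d) simp_all
qed

lemma N_U_f: "N V E p t d (U_f E U) = Max ((\<lambda>v. Delta_f E p (t - d) (fst U) {v} (snd (U_f E U))) ` V)"
  unfolding N_def statuses_after_U_f by (simp add: U_f_def)

lemma Delta_f_statuses_after_le_U_f:
  assumes V: "finite V" and EV: "E \<subseteq> V \<times> V" and U: "valid_status V E U"
    and p: "\<forall>e\<in>E. 0 \<le> p e \<and> p e \<le> 1" and "finite W"
    and U': "U' \<in> statuses_after E d U"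
  shows "Delta_f E p s (fst U') W (snd U') \<le> Delta_f E p s (fst U) W (snd (U_f E U))"
proof (rule Delta_f_le_explored)
  have U'_valid: "valid_status V E U'" using statuses_after_valid[OF EV U U'] .
  show "finite E" using V EV by (auto intro: finite_subset)
  show "finite (fst U)" "finite (fst U')"
    using V U U'_valid unfolding valid_status_def by (auto intro: finite_subset)
  show "realization E (snd U')" using U'_valid unfolding valid_status_def by blast
  show "observed_from (fst U') (snd U')" using U'_valid by (rule observed_from_valid_status)
  show "fst U \<subseteq> fst U'" using statuses_after_extends[OF U'] by blast
qed (use assms U_f_explored[OF U] in auto)

lemma N_le_bound:
  assumes "finite E" "E \<subseteq> V \<times> V" "valid_status V E U" "\<forall>e\<in>E. 0 \<le> p e \<and> p e \<le> 1"
    and "finite V" "V \<noteq> {}" "0 \<le> M"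
    and bound: "\<And>U' v. U' \<in> statuses_after E d U \<Longrightarrow> v \<in> V \<Longrightarrow>
      Delta_f E p (t - d) (fst U') {v} (snd U') \<le> M"
  shows "N V E p t d U \<le> M"
proof -
  have "N V E p t d U \<le> (\<Sum>U'\<in>statuses_after E d U. cond_prob p (snd U') (snd U) * M)"
    unfolding N_def
  proof (intro sum_mono mult_left_mono)
    fix U' assume U': "U' \<in> statuses_after E d U"
    show "Max ((\<lambda>v. Delta_f E p (t - d) (fst U') {v} (snd U')) ` V) \<le> M"
      using assms(5,6) bound[OF U'] by simp
    show "0 \<le> cond_prob p (snd U') (snd U)"
      using assms(2-4) U' by (rule cond_prob_statuses_after_nonneg)
  qed
  also have "\<dots> = M * (\<Sum>U'\<in>statuses_after E d U. cond_prob p (snd U') (snd U))"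
    by (simp add: sum_distrib_left mult.commute)
  also have "\<dots> \<le> M"
    using mult_left_mono[OF sum_cond_prob_statuses_after_le[OF assms(1-4)] \<open>0 \<le> M\<close>] by simp
  finally show ?thesis .
qed

theorem lemma6:
  fixes V :: "'v set" and E :: "'v edge set" and p :: "'v edge \<Rightarrow> real"
    and t d :: nat and U :: "'v status"
  assumes "ic_instance V E p"
    and "0 < d" and "d \<le> t"
    and "valid_status V E U"
  shows "N V E p t d (U_f E U) \<ge> N V E p t d U"
proof -
  have V: "finite V" "V \<noteq> {}" and EV: "E \<subseteq> V \<times> V" and p: "\<forall>e\<in>E. 0 \<le> p e \<and> p e \<le> 1"
    using assms(1) unfolding ic_instance_def by auto
  have fin: "finite E" "finite (fst U)"
    using V EV assms(4) unfolding valid_status_def by (auto intro: finite_subset)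
  let ?gain = "\<lambda>v. Delta_f E p (t - d) (fst U) {v} (snd (U_f E U))"
  have gain_le: "?gain v \<le> N V E p t d (U_f E U)" if "v \<in> V" for v
    unfolding N_U_f using V that by simp
  show ?thesis
  proof (rule N_le_bound[OF fin(1) EV assms(4) p V])
    obtain v where "v \<in> V" using V by blast
    have "0 \<le> ?gain v" using Delta_f_nonneg[OF fin(1) p fin(2)] by simp
    then show "0 \<le> N V E p t d (U_f E U)" using gain_le[OF \<open>v \<in> V\<close>] by linarith
  next
    fix U' v assume "U' \<in> statuses_after E d U" "v \<in> V"
    then show "Delta_f E p (t - d) (fst U') {v} (snd U') \<le> N V E p t d (U_f E U)"
      using Delta_f_statuses_after_le_U_f[OF V(1) EV assms(4) p, of "{v}"] gain_le
      by (meson finite.intros order_trans)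
  qed
qed

end
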